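(* Let $\mu\in(0,1)$ and let $\beta:[0,\infty)\to(0,\infty)$ be positive, bounded, non-increasing with $\lim_{a\to\infty}a\beta(a)=\mu$, and suppose $\beta(a)=\frac{\mu}{1+a}+g(a)$ where $g\in L^1(0,\infty)$ and there exist $K_0,\alpha>0$ with $\int_a^\infty|g(s)|ds\le K_0(1+a)^{-\alpha}$ for all $a\ge0$. Let $B(a)=\int_0^a\beta$ and $W(\tau,b)=C(\tau)e^{-B(e^{\tau}b)}(1-b)^{\mu-1}$ on $[0,1)$ with $C(\tau)>0$ such that $\int_0^1W(\tau,b)db=1$. Then there exists $K>0$ such that for all $\tau\ge0$ and $0\le b<1$, $$\frac{K^{-1}e^{\mu\tau}}{(1+e^{\tau}b)^\mu(1-b)^{1-\mu}}\le W(\tau,b)\le\frac{Ke^{\mu\tau}}{(1+e^{\tau}b)^\mu(1-b)^{1-\mu}}.$$ *)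

theory Defs
  imports "HOL-Analysis.Analysis"
begin

definition Bfun :: "(real \<Rightarrow> real) \<Rightarrow> real \<Rightarrow> real" where
  "Bfun \<beta> a = integral {0..a} \<beta>"

definition Wfun :: "real \<Rightarrow> (real \<Rightarrow> real) \<Rightarrow> (real \<Rightarrow> real) \<Rightarrow> real \<Rightarrow> real \<Rightarrow> real" where
  "Wfun \<mu> \<beta> C \<tau> b = C \<tau> * exp (- Bfun \<beta> (exp \<tau> * b)) * (1 - b) powr (\<mu> - 1)"

end

theory Submission
  imports Defs
begin

text \<open>Since \<beta>(s) = \<mu>/(1+s) + g(s) with g integrable, B(a) differs from \<mu> ln(1+a) by at
  most L = \<integral>|g|, so exp(-B(a)) lies within a factor e^L of (1+a)^(-\<mu>). It then suffices
  that the normalising constant satisfies C(\<tau>) \<asymp> e^(\<mu>\<tau>), and both directions come from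
  comparing \<integral>W = 1 with explicit integrals: from below, (1 + e^\<tau> b)^(-\<mu>) \<ge> (2e^\<tau>)^(-\<mu>)
  and (1-b)^(\<mu>-1) \<ge> 1; from above, (1 + e^\<tau> b)^(-\<mu>) \<le> e^(-\<mu>\<tau>) b^(-\<mu>), and
  b^(-\<mu>) (1-b)^(\<mu>-1) has the finite integral Beta(1-\<mu>, \<mu>).\<close>

lemma has_integral_Ico_iff_Ioo:
  fixes f :: "real \<Rightarrow> 'a :: banach"
  shows "(f has_integral I) {a..<b} \<longleftrightarrow> (f has_integral I) {a<..<b}"
proof (rule has_integral_spike_set_eq)
  show "negligible {x \<in> {a..<b} - {a<..<b}. f x \<noteq> 0}"
    by (rule negligible_subset[of "{a, b}"]) auto
  show "negligible {x \<in> {a<..<b} - {a..<b}. f x \<noteq> 0}"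
    by (rule negligible_subset[of "{a, b}"]) auto
qed

lemma has_integral_inverse_one_plus:
  assumes "0 \<le> (a::real)"
  shows "((\<lambda>s. 1 / (1 + s)) has_integral ln (1 + a)) {0..a}"
proof -
  have "((\<lambda>s. 1 / (1 + s)) has_integral (ln (1 + a) - ln (1 + 0))) {0..a}"
  proof (rule fundamental_theorem_of_calculus_interior)
    fix x :: real assume "x \<in> {0<..<a}"
    then have "((\<lambda>x. ln (1 + x)) has_real_derivative 1 / (1 + x)) (at x)"
      by (auto intro!: derivative_eq_intros)
    then show "((\<lambda>x. ln (1 + x)) has_vector_derivative 1 / (1 + x)) (at x)"
      by (simp add: has_real_derivative_iff_has_vector_derivative)
  qed (use assms in \<open>auto intro!: continuous_intros\<close>)
  then show ?thesis by simp
qed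

lemma Bfun_log_deviation_le:
  assumes decomp: "\<forall>s\<ge>0. \<beta> s = \<mu> / (1 + s) + g s"
    and g: "g absolutely_integrable_on {0..}"
    and a: "0 \<le> a"
  shows "\<bar>Bfun \<beta> a - \<mu> * ln (1 + a)\<bar> \<le> integral {0..} (\<lambda>s. \<bar>g s\<bar>)"
proof -
  have sub: "{0..a} \<subseteq> {0::real..}" by auto
  have g_int: "g integrable_on {0..}" and abs_g_int: "(\<lambda>s. \<bar>g s\<bar>) integrable_on {0..}"
    using g by (auto simp: absolutely_integrable_on_def)
  then have g_int_a: "g integrable_on {0..a}" and abs_g_int_a: "(\<lambda>s. \<bar>g s\<bar>) integrable_on {0..a}"
    by (auto intro: integrable_on_subinterval[OF _ sub])
  have "((\<lambda>s. \<mu> / (1 + s) + g s) has_integral (\<mu> * ln (1 + a) + integral {0..a} g)) {0..a}"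
    using has_integral_mult_right[OF has_integral_inverse_one_plus[OF a], of \<mu>] g_int_a
    by (intro has_integral_add) auto
  then have "Bfun \<beta> a - \<mu> * ln (1 + a) = integral {0..a} g"
    unfolding Bfun_def using decomp by (subst integral_cong[of _ _ "\<lambda>s. \<mu> / (1 + s) + g s"])
      (auto dest: integral_unique)
  also have "\<bar>\<dots>\<bar> \<le> integral {0..a} (\<lambda>s. \<bar>g s\<bar>)"
    using integral_norm_bound_integral[OF g_int_a abs_g_int_a] by simp
  also have "\<dots> \<le> integral {0..} (\<lambda>s. \<bar>g s\<bar>)"
    by (rule integral_subset_le[OF sub abs_g_int_a abs_g_int]) simp
  finally show ?thesis .
qed

lemma exp_neg_Bfun_comparable:
  assumes "\<bar>Bfun \<beta> a - \<mu> * ln (1 + a)\<bar> \<le> L" and "0 \<le> a"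
  shows "(1 + a) powr (- \<mu>) \<le> exp L * exp (- Bfun \<beta> a)"
    and "exp (- Bfun \<beta> a) \<le> exp L * (1 + a) powr (- \<mu>)"
proof -
  have powr_eq: "(1 + a) powr (- \<mu>) = exp (- \<mu> * ln (1 + a))"
    using assms(2) by (simp add: powr_def)
  show "(1 + a) powr (- \<mu>) \<le> exp L * exp (- Bfun \<beta> a)"
    using assms(1) unfolding powr_eq mult_exp_exp by simp
  show "exp (- Bfun \<beta> a) \<le> exp L * (1 + a) powr (- \<mu>)"
    using assms(1) unfolding powr_eq mult_exp_exp by simp
qed

lemma normalising_constant_le:
  assumes mu: "0 \<le> \<mu>" "\<mu> \<le> 1" and tau: "0 \<le> \<tau>" and C: "0 \<le> C \<tau>"
    and E: "\<forall>a\<ge>0. (1 + a) powr (- \<mu>) \<le> c * exp (- Bfun \<beta> a)" and c: "0 < c"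
    and norm: "(Wfun \<mu> \<beta> C \<tau> has_integral 1) {0..<1}"
  shows "C \<tau> \<le> c * 2 powr \<mu> * exp (\<mu> * \<tau>)"
proof -
  define m where "m = C \<tau> * (2 * exp \<tau>) powr (- \<mu>) / c"
  have below: "m \<le> Wfun \<mu> \<beta> C \<tau> b" if b: "b \<in> {0<..<1}" for b
  proof -
    have "exp \<tau> * b \<le> exp \<tau>" and "1 \<le> exp \<tau>"
      using b tau by (auto intro: mult_left_le)
    then have "1 + exp \<tau> * b \<le> 2 * exp \<tau>"
      by linarith
    then have "(2 * exp \<tau>) powr (- \<mu>) \<le> (1 + exp \<tau> * b) powr (- \<mu>)"
      using b mu by (intro powr_mono2') (auto simp: add_pos_nonneg)
    also have "\<dots> \<le> c * exp (- Bfun \<beta> (exp \<tau> * b))"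
      using E b by simp
    finally have "C \<tau> * (2 * exp \<tau>) powr (- \<mu>) \<le> C \<tau> * (c * exp (- Bfun \<beta> (exp \<tau> * b)))"
      using C by (rule mult_left_mono)
    then have "m \<le> C \<tau> * exp (- Bfun \<beta> (exp \<tau> * b))"
      unfolding m_def using c by (simp add: divide_le_eq mult_ac)
    also have "\<dots> \<le> C \<tau> * exp (- Bfun \<beta> (exp \<tau> * b)) * (1 - b) powr (\<mu> - 1)"
    proof -
      have "1 \<le> (1 - b) powr (\<mu> - 1)"
        using b mu powr_mono2'[of "\<mu> - 1" "1 - b" 1] by simp
      moreover have "0 \<le> C \<tau> * exp (- Bfun \<beta> (exp \<tau> * b))"
        using C by simp
      ultimately show ?thesis
        using mult_left_mono[of 1 "(1 - b) powr (\<mu> - 1)"] by (simp only: mult_1_right)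
    qed
    finally show ?thesis by (simp add: Wfun_def)
  qed
  have "((\<lambda>b. m) has_integral m) {0<..<1::real}"
    using has_integral_const_real[of m 0 1] by (simp add: has_integral_Icc_iff_Ioo)
  moreover have "(Wfun \<mu> \<beta> C \<tau> has_integral 1) {0<..<1}"
    using norm by (simp add: has_integral_Ico_iff_Ioo)
  ultimately have "m \<le> 1"
    using below by (rule has_integral_le)
  moreover have "m = C \<tau> / (c * (2 powr \<mu> * exp (\<mu> * \<tau>)))"
    by (simp add: m_def powr_minus powr_mult exp_powr_real divide_inverse mult_ac)
  ultimately show ?thesis
    using c by (simp add: divide_le_eq mult_ac)
qed

lemma normalising_constant_ge:
  assumes mu: "0 < \<mu>" "\<mu> < 1" and C: "0 \<le> C \<tau>"
    and E: "\<forall>a\<ge>0. exp (- Bfun \<beta> a) \<le> c * (1 + a) powr (- \<mu>)" and c: "0 < c"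
    and norm: "(Wfun \<mu> \<beta> C \<tau> has_integral 1) {0..<1}"
  shows "exp (\<mu> * \<tau>) \<le> c * Beta (1 - \<mu>) \<mu> * C \<tau>"
proof -
  define k where "k = c * C \<tau> * exp (- \<mu> * \<tau>)"
  have above: "Wfun \<mu> \<beta> C \<tau> b \<le> k * (b powr ((1 - \<mu>) - 1) * (1 - b) powr (\<mu> - 1))"
    if b: "b \<in> {0<..<1}" for b
  proof -
    have "(1 + exp \<tau> * b) powr (- \<mu>) \<le> (exp \<tau> * b) powr (- \<mu>)"
      using b mu by (intro powr_mono2') auto
    also have "\<dots> = exp (- \<mu> * \<tau>) * b powr (- \<mu>)"
      using b by (simp add: powr_mult exp_powr_real mult_ac)
    finally have "c * (1 + exp \<tau> * b) powr (- \<mu>) \<le> c * (exp (- \<mu> * \<tau>) * b powr (- \<mu>))"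
      using c by simp
    moreover have "exp (- Bfun \<beta> (exp \<tau> * b)) \<le> c * (1 + exp \<tau> * b) powr (- \<mu>)"
      using E b by simp
    ultimately have "exp (- Bfun \<beta> (exp \<tau> * b)) \<le> c * (exp (- \<mu> * \<tau>) * b powr (- \<mu>))"
      by linarith
    then have "C \<tau> * exp (- Bfun \<beta> (exp \<tau> * b)) * (1 - b) powr (\<mu> - 1)
        \<le> C \<tau> * (c * (exp (- \<mu> * \<tau>) * b powr (- \<mu>))) * (1 - b) powr (\<mu> - 1)"
      using C by (intro mult_right_mono mult_left_mono) auto
    then show ?thesis
      by (simp add: Wfun_def k_def mult_ac)
  qed
  have "(Wfun \<mu> \<beta> C \<tau> has_integral 1) {0<..<1}"
    using norm by (simp add: has_integral_Ico_iff_Ioo)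
  moreover have "((\<lambda>b. k * (b powr ((1 - \<mu>) - 1) * (1 - b) powr (\<mu> - 1))) has_integral k * Beta (1 - \<mu>) \<mu>)
      {0<..<1}"
    unfolding has_integral_Icc_iff_Ioo[symmetric] using mu
    by (intro has_integral_mult_right has_integral_Beta_real) auto
  ultimately have "1 \<le> k * Beta (1 - \<mu>) \<mu>"
    using above by (rule has_integral_le)
  then have "exp (\<mu> * \<tau>) \<le> exp (\<mu> * \<tau>) * (k * Beta (1 - \<mu>) \<mu>)"
    using mult_left_mono[of 1 _ "exp (\<mu> * \<tau>)"] by simp
  also have "\<dots> = c * Beta (1 - \<mu>) \<mu> * C \<tau>"
    by (simp add: k_def exp_minus field_simps)
  finally show ?thesis .
qed

lemma normalising_constant_comparable:
  assumes mu: "0 < \<mu>" "\<mu> < 1" and tau: "0 \<le> \<tau>" and C: "0 \<le> C \<tau>" and c: "0 < c"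
    and E_lower: "\<forall>a\<ge>0. (1 + a) powr (- \<mu>) \<le> c * exp (- Bfun \<beta> a)"
    and E_upper: "\<forall>a\<ge>0. exp (- Bfun \<beta> a) \<le> c * (1 + a) powr (- \<mu>)"
    and norm: "(Wfun \<mu> \<beta> C \<tau> has_integral 1) {0..<1}"
  shows "exp (\<mu> * \<tau>) \<le> c * max (2 powr \<mu>) (Beta (1 - \<mu>) \<mu>) * C \<tau>"
    and "C \<tau> \<le> c * max (2 powr \<mu>) (Beta (1 - \<mu>) \<mu>) * exp (\<mu> * \<tau>)"
proof -
  have "exp (\<mu> * \<tau>) \<le> c * Beta (1 - \<mu>) \<mu> * C \<tau>"
    by (rule normalising_constant_ge[OF mu C E_upper c norm])
  also have "\<dots> \<le> c * max (2 powr \<mu>) (Beta (1 - \<mu>) \<mu>) * C \<tau>"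
    using c C by (intro mult_right_mono mult_left_mono) auto
  finally show "exp (\<mu> * \<tau>) \<le> c * max (2 powr \<mu>) (Beta (1 - \<mu>) \<mu>) * C \<tau>" .
  have "C \<tau> \<le> c * 2 powr \<mu> * exp (\<mu> * \<tau>)"
    using mu by (intro normalising_constant_le[OF _ _ tau C E_lower c norm]) auto
  also have "\<dots> \<le> c * max (2 powr \<mu>) (Beta (1 - \<mu>) \<mu>) * exp (\<mu> * \<tau>)"
    using c by (intro mult_right_mono mult_left_mono) auto
  finally show "C \<tau> \<le> c * max (2 powr \<mu>) (Beta (1 - \<mu>) \<mu>) * exp (\<mu> * \<tau>)" .
qed

lemma Wfun_two_sided_bound:
  assumes b: "0 \<le> b" "b < 1" and c: "0 < c" and D: "0 < D"
    and E: "(1 + exp \<tau> * b) powr (- \<mu>) \<le> c * exp (- Bfun \<beta> (exp \<tau> * b))"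
      "exp (- Bfun \<beta> (exp \<tau> * b)) \<le> c * (1 + exp \<tau> * b) powr (- \<mu>)"
    and C: "exp (\<mu> * \<tau>) \<le> D * C \<tau>" "C \<tau> \<le> D * exp (\<mu> * \<tau>)"
  shows "inverse (c * D) * exp (\<mu> * \<tau>) / ((1 + exp \<tau> * b) powr \<mu> * (1 - b) powr (1 - \<mu>))
           \<le> Wfun \<mu> \<beta> C \<tau> b"
    and "Wfun \<mu> \<beta> C \<tau> b
           \<le> c * D * exp (\<mu> * \<tau>) / ((1 + exp \<tau> * b) powr \<mu> * (1 - b) powr (1 - \<mu>))"
proof -
  define p where "p = (1 + exp \<tau> * b) powr (- \<mu>)"
  define q where "q = (1 - b) powr (\<mu> - 1)"
  define e where "e = exp (- Bfun \<beta> (exp \<tau> * b))"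
  have q: "0 < q" using b by (simp add: q_def)
  have C_pos: "0 < C \<tau>"
    using C D by (metis exp_gt_zero order_less_le_trans zero_less_mult_pos)
  have "1 / ((1 + exp \<tau> * b) powr \<mu> * (1 - b) powr (1 - \<mu>)) = p * q"
    using powr_minus[of "1 - b" "1 - \<mu>"] by (simp add: p_def q_def powr_minus field_simps)
  then have denom: "x / ((1 + exp \<tau> * b) powr \<mu> * (1 - b) powr (1 - \<mu>)) = x * (p * q)" for x
    by (metis mult.right_neutral times_divide_eq_right)
  have W: "Wfun \<mu> \<beta> C \<tau> b = C \<tau> * e * q"
    by (simp add: Wfun_def e_def q_def)
  have "exp (\<mu> * \<tau>) / D * (p / c) \<le> C \<tau> * e"
    using C E c D C_pos by (intro mult_mono) (auto simp: p_def e_def divide_le_eq mult_ac)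
  then have "exp (\<mu> * \<tau>) / D * (p / c) * q \<le> C \<tau> * e * q"
    using q by (intro mult_right_mono) auto
  then show "inverse (c * D) * exp (\<mu> * \<tau>) / ((1 + exp \<tau> * b) powr \<mu> * (1 - b) powr (1 - \<mu>))
           \<le> Wfun \<mu> \<beta> C \<tau> b"
    unfolding denom W by (simp add: divide_inverse mult_ac)
  have "C \<tau> * e \<le> D * exp (\<mu> * \<tau>) * (c * p)"
    using C E D by (intro mult_mono) (auto simp: p_def e_def)
  then have "C \<tau> * e * q \<le> D * exp (\<mu> * \<tau>) * (c * p) * q"
    using q by (intro mult_right_mono) auto
  then show "Wfun \<mu> \<beta> C \<tau> b
           \<le> c * D * exp (\<mu> * \<tau>) / ((1 + exp \<tau> * b) powr \<mu> * (1 - b) powr (1 - \<mu>))"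
    unfolding denom W by (simp add: mult_ac)
qed

theorem lemma7:
  fixes \<mu> K0 \<alpha> :: real and \<beta> g C :: "real \<Rightarrow> real"
  assumes mu: "0 < \<mu>" "\<mu> < 1"
    and pos: "\<forall>a\<ge>0. \<beta> a > 0"
    and bdd: "\<exists>M. \<forall>a\<ge>0. \<beta> a \<le> M"
    and noninc: "\<forall>a b. 0 \<le> a \<longrightarrow> a \<le> b \<longrightarrow> \<beta> b \<le> \<beta> a"
    and lim: "((\<lambda>a. a * \<beta> a) \<longlongrightarrow> \<mu>) at_top"
    and decomp: "\<forall>a\<ge>0. \<beta> a = \<mu> / (1 + a) + g a"
    and gL1: "g absolutely_integrable_on {0..}"
    and K0: "K0 > 0" and alpha: "\<alpha> > 0"
    and tail: "\<forall>a\<ge>0. integral {a..} (\<lambda>s. \<bar>g s\<bar>) \<le> K0 * (1 + a) powr (- \<alpha>)"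
    and Cpos: "\<forall>\<tau>\<ge>0. C \<tau> > 0"
    and Cnorm: "\<forall>\<tau>\<ge>0. (Wfun \<mu> \<beta> C \<tau> has_integral 1) {0..<1}"
  shows "\<exists>K>0. \<forall>\<tau>\<ge>0. \<forall>b. 0 \<le> b \<and> b < 1 \<longrightarrow>
           inverse K * exp (\<mu> * \<tau>) / ((1 + exp \<tau> * b) powr \<mu> * (1 - b) powr (1 - \<mu>))
             \<le> Wfun \<mu> \<beta> C \<tau> b \<and>
           Wfun \<mu> \<beta> C \<tau> b
             \<le> K * exp (\<mu> * \<tau>) / ((1 + exp \<tau> * b) powr \<mu> * (1 - b) powr (1 - \<mu>))"
proof -
  define c where "c = exp (integral {0..} (\<lambda>s. \<bar>g s\<bar>))"
  define D where "D = c * max (2 powr \<mu>) (Beta (1 - \<mu>) \<mu>)"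
  have c: "0 < c" by (simp add: c_def)
  have D: "0 < D" using c by (simp add: D_def less_max_iff_disj)
  have E: "(1 + a) powr (- \<mu>) \<le> c * exp (- Bfun \<beta> a)"
          "exp (- Bfun \<beta> a) \<le> c * (1 + a) powr (- \<mu>)" if "0 \<le> a" for a
    using exp_neg_Bfun_comparable[OF Bfun_log_deviation_le[OF decomp gL1 that] that]
    unfolding c_def by auto
  have C: "exp (\<mu> * \<tau>) \<le> D * C \<tau>" "C \<tau> \<le> D * exp (\<mu> * \<tau>)" if "0 \<le> \<tau>" for \<tau>
    unfolding D_def using E Cpos Cnorm that
    by (auto simp: less_imp_le intro!: normalising_constant_comparable[OF mu that _ c])
  show ?thesis
  proof (intro exI[of _ "c * D"] conjI allI impI)
    show "0 < c * D" using c D by simp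
    fix \<tau> b :: real assume \<tau>: "0 \<le> \<tau>" and b: "0 \<le> b \<and> b < 1"
    then have a: "0 \<le> exp \<tau> * b" by simp
    from b show "inverse (c * D) * exp (\<mu> * \<tau>) / ((1 + exp \<tau> * b) powr \<mu> * (1 - b) powr (1 - \<mu>))
        \<le> Wfun \<mu> \<beta> C \<tau> b"
      by (intro Wfun_two_sided_bound(1)[where C = C and \<tau> = \<tau>, OF _ _ c D E[OF a] C[OF \<tau>]]) auto
    from b show "Wfun \<mu> \<beta> C \<tau> b
        \<le> c * D * exp (\<mu> * \<tau>) / ((1 + exp \<tau> * b) powr \<mu> * (1 - b) powr (1 - \<mu>))"
      by (intro Wfun_two_sided_bound(2)[where C = C and \<tau> = \<tau>, OF _ _ c D E[OF a] C[OF \<tau>]]) auto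
  qed
qed

end
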